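(* In the framework of the context, let $\Gamma\subseteq Sen(\Sigma)$ and $\psi\in Sen(\Sigma)$, and let $\varphi\in Sen(\Sigma)$ be an invariant formula. Then $\Gamma\cup\{\varphi\}\vdash_\Sigma\psi$ if and only if $\Gamma\vdash_\Sigma\varphi\Rightarrow\psi$.
   Context: Framework. $\mathcal{I}$ is a stratified institution: signatures $\Sigma$, formulas $Sen(\Sigma)$, models $Mod(\Sigma)$, a set of states $[\![M]\!]_\Sigma$ for each model (functorial along model morphisms $\mu$, giving maps $[\![\mu]\!]_\Sigma$), and satisfaction $M\models^\eta_\Sigma\varphi$; $M\models_\Sigma\varphi$ iff $M\models^\eta_\Sigma\varphi$ for all states $\eta$; $[\![M]\!]_\Sigma(\varphi)=\{\eta\mid M\models^\eta_\Sigma\varphi\}$; $\varphi\preceq_M\psi$ iff $[\![M]\!]_\Sigma(\varphi)\subseteq[\![M]\!]_\Sigma(\psi)$, $\equiv_M$ the corresponding equality; $\Gamma\models\varphi$ iff every model satisfying all of $\Gamma$ satisfies $\varphi$. $\mathcal{I}$ has semantic $\neg,\wedge,\vee,\Rightarrow$ (complement, intersection, union, and complement-union on state sets). There is an index set $I$ and for each $i\in I$ unary operations $E^i,D^i$ on formulas with, for all $M$, $\varphi,\psi$: $E^i(\varphi)\equiv_M\neg D^i(\neg\varphi)$, $E^i(\varphi\wedge\psi)\equiv_M E^i(\varphi)\wedge E^i(\psi)$, $D^i(\varphi\vee\psi)\equiv_M D^i(\varphi)\vee D^i(\psi)$, $E^i(\varphi)\preceq_M\varphi\preceq_M D^i(\varphi)$,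 and $\varphi\models E^i(\varphi)$. There is a subfunctor $Sen^{base}\subseteq Sen$ with each $Sen^{base}(\Sigma)$ basic, and $Sen(\Sigma)$ is the least set containing $Sen^{base}(\Sigma)$ closed under $\neg,\wedge,\vee,\Rightarrow,E^i,D^i$. A formula $\varphi$ is invariant if $\varphi\preceq_M E^i(\varphi)$ for all $i\in I$ and all $M$. $\varphi'$ is an instance of $\varphi$ for $i$ if $E^i(\varphi)\preceq_M\varphi'$ for all $M$. A tautology instance is a formula obtained from a classical propositional tautology by substituting formulas for its variables. Proof system: axioms are all tautology instances; $E^i(\varphi)\Leftrightarrow\neg D^i(\neg\varphi)$; $E^i(\varphi\Rightarrow\psi)\Rightarrow(E^i(\varphi)\Rightarrow E^i(\psi))$; $E^i(\varphi)\Rightarrow\varphi'$ whenever $\varphi'$ is an instance of $\varphi$ for $i$; $\varphi\Rightarrow E^i(\varphi)$ whenever $\varphi$ is invariant. $\Gamma\vdash_\Sigma\varphi$ is the least relation such that: $\varphi\in\Gamma$ implies $\Gamma\vdash_\Sigma\varphi$; every axiom $\varphi$ gives $\Gamma\vdash_\Sigma\varphi$; $\Gamma\vdash_\Sigma\varphi$ and $\Delta\vdash_\Sigma\varphi\Rightarrow\psi$ give $\Gamma\cup\Delta\vdash_\Sigma\psi$ (Modus Ponens); $\Gamma\vdash_\Sigma\varphi$ gives $\Gamma\vdash_\Sigma E^i(\varphi)$ (Necessity). *)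

theory Defs
  imports Main
begin

text \<open>A stratified institution, restricted to one fixed signature Sigma.
  'f: formulas, 'm: models, 's: states, 'i: the index set type.\<close>

record ('f,'m,'s,'i) frame =
  sen  :: "'f set"
  base :: "'f set"
  mods :: "'m set"
  hom  :: "'m \<Rightarrow> 'm \<Rightarrow> bool"     (* there is a model morphism M -> N *)
  st   :: "'m \<Rightarrow> 's set"
  sat  :: "'m \<Rightarrow> 's \<Rightarrow> 'f \<Rightarrow> bool"
  neg  :: "'f \<Rightarrow> 'f"
  cnj  :: "'f \<Rightarrow> 'f \<Rightarrow> 'f"
  dsj  :: "'f \<Rightarrow> 'f \<Rightarrow> 'f"
  imp  :: "'f \<Rightarrow> 'f \<Rightarrow> 'f"
  idx  :: "'i set"
  Eop  :: "'i \<Rightarrow> 'f \<Rightarrow> 'f"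
  Dop  :: "'i \<Rightarrow> 'f \<Rightarrow> 'f"

definition sem :: "('f,'m,'s,'i) frame \<Rightarrow> 'm \<Rightarrow> 'f \<Rightarrow> 's set" where
  "sem F M \<phi> = {\<eta> \<in> st F M. sat F M \<eta> \<phi>}"

definition models :: "('f,'m,'s,'i) frame \<Rightarrow> 'm \<Rightarrow> 'f \<Rightarrow> bool" where
  "models F M \<phi> \<longleftrightarrow> (\<forall>\<eta>\<in>st F M. sat F M \<eta> \<phi>)"

definition sem_entails :: "('f,'m,'s,'i) frame \<Rightarrow> 'f set \<Rightarrow> 'f \<Rightarrow> bool" where
  "sem_entails F \<Gamma> \<phi> \<longleftrightarrow>
     (\<forall>M\<in>mods F. (\<forall>\<gamma>\<in>\<Gamma>. models F M \<gamma>) \<longrightarrow> models F M \<phi>)"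

definition basic :: "('f,'m,'s,'i) frame \<Rightarrow> 'f set \<Rightarrow> bool" where
  "basic F B \<longleftrightarrow> (\<exists>MB\<in>mods F. \<forall>M\<in>mods F.
      (\<forall>\<rho>\<in>B. models F M \<rho>) \<longleftrightarrow> hom F MB M)"

inductive_set gen :: "('f,'m,'s,'i) frame \<Rightarrow> 'f set" for F where
  gen_base: "\<phi> \<in> base F \<Longrightarrow> \<phi> \<in> gen F"
| gen_neg: "\<phi> \<in> gen F \<Longrightarrow> neg F \<phi> \<in> gen F"
| gen_cnj: "\<phi> \<in> gen F \<Longrightarrow> \<psi> \<in> gen F \<Longrightarrow> cnj F \<phi> \<psi> \<in> gen F"
| gen_dsj: "\<phi> \<in> gen F \<Longrightarrow> \<psi> \<in> gen F \<Longrightarrow> dsj F \<phi> \<psi> \<in> gen F"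
| gen_imp: "\<phi> \<in> gen F \<Longrightarrow> \<psi> \<in> gen F \<Longrightarrow> imp F \<phi> \<psi> \<in> gen F"
| gen_E: "i \<in> idx F \<Longrightarrow> \<phi> \<in> gen F \<Longrightarrow> Eop F i \<phi> \<in> gen F"
| gen_D: "i \<in> idx F \<Longrightarrow> \<phi> \<in> gen F \<Longrightarrow> Dop F i \<phi> \<in> gen F"

definition framework :: "('f,'m,'s,'i) frame \<Rightarrow> bool" where
  "framework F \<longleftrightarrow>
     sen F = gen F \<and> basic F (base F) \<and>
     (\<forall>M\<in>mods F. \<forall>\<phi>\<in>sen F. \<forall>\<psi>\<in>sen F.
        sem F M (neg F \<phi>) = st F M - sem F M \<phi> \<and>
        sem F M (cnj F \<phi> \<psi>) = sem F M \<phi> \<inter> sem F M \<psi> \<and>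
        sem F M (dsj F \<phi> \<psi>) = sem F M \<phi> \<union> sem F M \<psi> \<and>
        sem F M (imp F \<phi> \<psi>) = (st F M - sem F M \<phi>) \<union> sem F M \<psi> \<and>
        (\<forall>i\<in>idx F.
          sem F M (Eop F i \<phi>) = sem F M (neg F (Dop F i (neg F \<phi>))) \<and>
          sem F M (Eop F i (cnj F \<phi> \<psi>)) = sem F M (cnj F (Eop F i \<phi>) (Eop F i \<psi>)) \<and>
          sem F M (Dop F i (dsj F \<phi> \<psi>)) = sem F M (dsj F (Dop F i \<phi>) (Dop F i \<psi>)) \<and>
          sem F M (Eop F i \<phi>) \<subseteq> sem F M \<phi> \<and>
          sem F M \<phi> \<subseteq> sem F M (Dop F i \<phi>))) \<and>
     (\<forall>i\<in>idx F. \<forall>\<phi>\<in>sen F. sem_entails F {\<phi>} (Eop F i \<phi>))"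

definition invariant :: "('f,'m,'s,'i) frame \<Rightarrow> 'f \<Rightarrow> bool" where
  "invariant F \<phi> \<longleftrightarrow> (\<forall>i\<in>idx F. \<forall>M\<in>mods F. sem F M \<phi> \<subseteq> sem F M (Eop F i \<phi>))"

definition is_instance :: "('f,'m,'s,'i) frame \<Rightarrow> 'i \<Rightarrow> 'f \<Rightarrow> 'f \<Rightarrow> bool" where
  "is_instance F i \<phi> \<phi>' \<longleftrightarrow> (\<forall>M\<in>mods F. sem F M (Eop F i \<phi>) \<subseteq> sem F M \<phi>')"

datatype pform = PVar nat | PNeg pform | PConj pform pform | PDisj pform pform | PImp pform pform

fun peval :: "(nat \<Rightarrow> bool) \<Rightarrow> pform \<Rightarrow> bool" where
  "peval v (PVar n) = v n"
| "peval v (PNeg p) = (\<not> peval v p)"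
| "peval v (PConj p q) = (peval v p \<and> peval v q)"
| "peval v (PDisj p q) = (peval v p \<or> peval v q)"
| "peval v (PImp p q) = (peval v p \<longrightarrow> peval v q)"

definition tautology :: "pform \<Rightarrow> bool" where
  "tautology p \<longleftrightarrow> (\<forall>v. peval v p)"

fun psubst :: "('f,'m,'s,'i) frame \<Rightarrow> (nat \<Rightarrow> 'f) \<Rightarrow> pform \<Rightarrow> 'f" where
  "psubst F \<sigma> (PVar n) = \<sigma> n"
| "psubst F \<sigma> (PNeg p) = neg F (psubst F \<sigma> p)"
| "psubst F \<sigma> (PConj p q) = cnj F (psubst F \<sigma> p) (psubst F \<sigma> q)"
| "psubst F \<sigma> (PDisj p q) = dsj F (psubst F \<sigma> p) (psubst F \<sigma> q)"
| "psubst F \<sigma> (PImp p q) = imp F (psubst F \<sigma> p) (psubst F \<sigma> q)"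

definition tautology_instance :: "('f,'m,'s,'i) frame \<Rightarrow> 'f \<Rightarrow> bool" where
  "tautology_instance F \<phi> \<longleftrightarrow>
     (\<exists>p \<sigma>. tautology p \<and> (\<forall>n. \<sigma> n \<in> sen F) \<and> \<phi> = psubst F \<sigma> p)"

definition iff :: "('f,'m,'s,'i) frame \<Rightarrow> 'f \<Rightarrow> 'f \<Rightarrow> 'f" where
  "iff F \<phi> \<psi> = cnj F (imp F \<phi> \<psi>) (imp F \<psi> \<phi>)"

definition axiom :: "('f,'m,'s,'i) frame \<Rightarrow> 'f \<Rightarrow> bool" where
  "axiom F \<chi> \<longleftrightarrow>
     tautology_instance F \<chi>
   \<or> (\<exists>i\<in>idx F. \<exists>\<phi>\<in>sen F. \<chi> = iff F (Eop F i \<phi>) (neg F (Dop F i (neg F \<phi>))))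
   \<or> (\<exists>i\<in>idx F. \<exists>\<phi>\<in>sen F. \<exists>\<psi>\<in>sen F.
        \<chi> = imp F (Eop F i (imp F \<phi> \<psi>)) (imp F (Eop F i \<phi>) (Eop F i \<psi>)))
   \<or> (\<exists>i\<in>idx F. \<exists>\<phi>\<in>sen F. \<exists>\<phi>'\<in>sen F.
        is_instance F i \<phi> \<phi>' \<and> \<chi> = imp F (Eop F i \<phi>) \<phi>')
   \<or> (\<exists>i\<in>idx F. \<exists>\<phi>\<in>sen F. invariant F \<phi> \<and> \<chi> = imp F \<phi> (Eop F i \<phi>))"

inductive derivable :: "('f,'m,'s,'i) frame \<Rightarrow> 'f set \<Rightarrow> 'f \<Rightarrow> bool" for F where
  der_hyp: "\<phi> \<in> \<Gamma> \<Longrightarrow> derivable F \<Gamma> \<phi>"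
| der_ax: "axiom F \<phi> \<Longrightarrow> derivable F \<Gamma> \<phi>"
| der_mp: "derivable F \<Gamma> \<phi> \<Longrightarrow> derivable F \<Delta> (imp F \<phi> \<psi>) \<Longrightarrow> \<psi> \<in> sen F
           \<Longrightarrow> derivable F (\<Gamma> \<union> \<Delta>) \<psi>"
| der_nec: "derivable F \<Gamma> \<phi> \<Longrightarrow> i \<in> idx F \<Longrightarrow> derivable F \<Gamma> (Eop F i \<phi>)"

end

theory Submission
  imports Defs
begin

text \<open>The classical deduction theorem, by induction on derivations,
  with the tautologies K and S handling hypotheses, axioms and Modus Ponens.
  Necessity is the only obstacle: from \<open>\<phi> \<Rightarrow> \<chi>\<close> it yields \<open>E\<^sup>i(\<phi>) \<Rightarrow> E\<^sup>i(\<chi>)\<close>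
  by the K axiom for \<open>E\<^sup>i\<close>, and the invariance axiom \<open>\<phi> \<Rightarrow> E\<^sup>i(\<phi>)\<close> turns this
  into \<open>\<phi> \<Rightarrow> E\<^sup>i(\<chi>)\<close>.\<close>

lemma framework_sen_eq_gen: "framework F \<Longrightarrow> sen F = gen F"
  by (simp add: framework_def)

lemma psubst_in_gen: "(\<And>n. \<sigma> n \<in> gen F) \<Longrightarrow> psubst F \<sigma> p \<in> gen F"
  by (induction p) (auto intro: gen.intros)

lemma axiom_in_sen:
  assumes "framework F" and "axiom F \<chi>"
  shows "\<chi> \<in> sen F"
  using assms(2) psubst_in_gen[of _ F]
  unfolding framework_sen_eq_gen[OF assms(1)] axiom_def tautology_instance_def iff_def
  by (auto intro!: gen_neg gen_cnj gen_imp gen_E gen_D)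

lemma imp_in_sen: "framework F \<Longrightarrow> \<phi> \<in> sen F \<Longrightarrow> \<psi> \<in> sen F \<Longrightarrow> imp F \<phi> \<psi> \<in> sen F"
  by (simp add: framework_sen_eq_gen gen_imp)

lemma Eop_in_sen: "framework F \<Longrightarrow> i \<in> idx F \<Longrightarrow> \<phi> \<in> sen F \<Longrightarrow> Eop F i \<phi> \<in> sen F"
  by (simp add: framework_sen_eq_gen gen_E)

lemma derivable_in_sen:
  "derivable F \<Gamma> \<chi> \<Longrightarrow> framework F \<Longrightarrow> \<Gamma> \<subseteq> sen F \<Longrightarrow> \<chi> \<in> sen F"
  by (induction rule: derivable.induct) (auto simp: axiom_in_sen Eop_in_sen)

lemma axiom_tautology_instance:
  "tautology p \<Longrightarrow> (\<And>n. \<sigma> n \<in> sen F) \<Longrightarrow> axiom F (psubst F \<sigma> p)"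
  unfolding axiom_def tautology_instance_def by blast

lemma derivable_tautology_K:
  assumes "\<phi> \<in> sen F" and "\<psi> \<in> sen F"
  shows "derivable F \<Gamma> (imp F \<phi> (imp F \<psi> \<phi>))"
  using axiom_tautology_instance[of "PImp (PVar 0) (PImp (PVar 1) (PVar 0))"
      "\<lambda>n. if n = 0 then \<phi> else \<psi>" F] assms
  by (simp add: tautology_def der_ax)

lemma derivable_tautology_S:
  assumes "\<phi> \<in> sen F" and "\<psi> \<in> sen F" and "\<chi> \<in> sen F"
  shows "derivable F \<Gamma>
    (imp F (imp F \<phi> (imp F \<psi> \<chi>)) (imp F (imp F \<phi> \<psi>) (imp F \<phi> \<chi>)))"
  using axiom_tautology_instance[of
      "PImp (PImp (PVar 0) (PImp (PVar 1) (PVar 2))) (PImp (PImp (PVar 0) (PVar 1)) (PImp (PVar 0) (PVar 2)))"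
      "\<lambda>n. if n = 0 then \<phi> else if n = 1 then \<psi> else \<chi>" F] assms
  by (simp add: tautology_def der_ax)

lemma derivable_tautology_I:
  assumes "\<phi> \<in> sen F"
  shows "derivable F \<Gamma> (imp F \<phi> \<phi>)"
  using axiom_tautology_instance[of "PImp (PVar 0) (PVar 0)" "\<lambda>_. \<phi>" F] assms
  by (simp add: tautology_def der_ax)

lemma derivable_mp:
  "derivable F \<Gamma> \<phi> \<Longrightarrow> derivable F \<Gamma> (imp F \<phi> \<psi>) \<Longrightarrow> \<psi> \<in> sen F \<Longrightarrow> derivable F \<Gamma> \<psi>"
  using der_mp[of F \<Gamma> \<phi> \<Gamma> \<psi>] by simp

context
  fixes F :: "('f,'m,'s,'i) frame" and \<Gamma> :: "'f set"
  assumes framework: "framework F" and hyps_in_sen: "\<Gamma> \<subseteq> sen F"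
begin

lemma derivable_imp_intro:
  assumes "derivable F \<Gamma> \<psi>" and "\<phi> \<in> sen F"
  shows "derivable F \<Gamma> (imp F \<phi> \<psi>)"
proof -
  have "\<psi> \<in> sen F"
    using derivable_in_sen assms(1) framework hyps_in_sen .
  from derivable_tautology_K[OF this assms(2)]
  show ?thesis
    by (rule derivable_mp[OF assms(1) _ imp_in_sen[OF framework assms(2) \<open>\<psi> \<in> sen F\<close>]])
qed

lemma derivable_imp_mp:
  assumes "derivable F \<Gamma> (imp F \<phi> \<psi>)" and "derivable F \<Gamma> (imp F \<phi> (imp F \<psi> \<chi>))"
    and "\<phi> \<in> sen F" and "\<psi> \<in> sen F" and "\<chi> \<in> sen F"
  shows "derivable F \<Gamma> (imp F \<phi> \<chi>)"
proof -
  note imp_in_sen = imp_in_sen[OF framework]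
  have "derivable F \<Gamma> (imp F (imp F \<phi> \<psi>) (imp F \<phi> \<chi>))"
    by (rule derivable_mp[OF assms(2) derivable_tautology_S[OF assms(3-)]])
      (intro imp_in_sen assms(3-))
  from derivable_mp[OF assms(1) this imp_in_sen[OF assms(3,5)]] show ?thesis .
qed

lemma derivable_imp_trans:
  assumes "derivable F \<Gamma> (imp F \<phi> \<psi>)" and "derivable F \<Gamma> (imp F \<psi> \<chi>)"
    and "\<phi> \<in> sen F" and "\<psi> \<in> sen F" and "\<chi> \<in> sen F"
  shows "derivable F \<Gamma> (imp F \<phi> \<chi>)"
  using derivable_imp_mp[OF assms(1) derivable_imp_intro[OF assms(2)]] assms(3-) by blast

lemma derivable_imp_Eop:
  assumes "derivable F \<Gamma> (imp F \<phi> \<chi>)" and "invariant F \<phi>" and "i \<in> idx F"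
    and "\<phi> \<in> sen F" and "\<chi> \<in> sen F"
  shows "derivable F \<Gamma> (imp F \<phi> (Eop F i \<chi>))"
proof -
  have E_in_sen: "Eop F i \<phi> \<in> sen F" "Eop F i \<chi> \<in> sen F"
    using Eop_in_sen[OF framework] assms(3-) by auto
  have "axiom F (imp F (Eop F i (imp F \<phi> \<chi>)) (imp F (Eop F i \<phi>) (Eop F i \<chi>)))"
    unfolding axiom_def using assms(3-) by blast
  from derivable_mp[OF der_nec[OF assms(1,3)] der_ax[OF this]]
  have E_mono: "derivable F \<Gamma> (imp F (Eop F i \<phi>) (Eop F i \<chi>))"
    using imp_in_sen[OF framework] E_in_sen by blast
  have "axiom F (imp F \<phi> (Eop F i \<phi>))"
    unfolding axiom_def using assms(2-4) by blast
  then show ?thesis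
    using derivable_imp_trans[OF der_ax E_mono] assms(4) E_in_sen by blast
qed

lemma derivable_deduction:
  assumes "\<phi> \<in> sen F" and "invariant F \<phi>"
  shows "derivable F \<Delta> \<chi> \<Longrightarrow> \<Delta> \<subseteq> insert \<phi> \<Gamma> \<Longrightarrow> derivable F \<Gamma> (imp F \<phi> \<chi>)"
proof (induction rule: derivable.induct)
  case (der_hyp \<chi> \<Delta>)
  then consider "\<chi> = \<phi>" | "\<chi> \<in> \<Gamma>"
    by blast
  then show ?case
  proof cases
    case 1
    then show ?thesis
      using derivable_tautology_I[OF assms(1)] by simp
  next
    case 2
    then show ?thesis
      using derivable_imp_intro[OF derivable.der_hyp] assms(1) by blast
  qed
next
  case (der_ax \<chi> \<Delta>)
  then show ?case
    using derivable_imp_intro[OF derivable.der_ax] assms(1) by blast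
next
  case (der_mp \<Delta>\<^sub>1 \<psi> \<Delta>\<^sub>2 \<chi>)
  have "\<psi> \<in> sen F"
    using derivable_in_sen[OF der_mp.hyps(1) framework] der_mp.prems hyps_in_sen assms(1)
    by auto
  moreover have "derivable F \<Gamma> (imp F \<phi> \<psi>)" "derivable F \<Gamma> (imp F \<phi> (imp F \<psi> \<chi>))"
    using der_mp.IH der_mp.prems by auto
  ultimately show ?case
    using derivable_imp_mp assms(1) der_mp.hyps(3) by blast
next
  case (der_nec \<Delta> \<chi> i)
  have "\<chi> \<in> sen F"
    using derivable_in_sen[OF der_nec.hyps(1) framework] der_nec.prems hyps_in_sen assms(1)
    by auto
  then show ?case
    using derivable_imp_Eop[OF der_nec.IH[OF der_nec.prems] assms(2) der_nec.hyps(2) assms(1)]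
    by blast
qed

end

theorem mainTheorem8:
  fixes F :: "('f,'m,'s,'i) frame"
  assumes "framework F"
    and "\<Gamma> \<subseteq> sen F" and "\<psi> \<in> sen F" and "\<phi> \<in> sen F"
    and "invariant F \<phi>"
  shows "derivable F (\<Gamma> \<union> {\<phi>}) \<psi> \<longleftrightarrow> derivable F \<Gamma> (imp F \<phi> \<psi>)"
proof
  assume "derivable F (\<Gamma> \<union> {\<phi>}) \<psi>"
  then show "derivable F \<Gamma> (imp F \<phi> \<psi>)"
    using derivable_deduction[OF assms(1,2,4,5)] by simp
next
  assume "derivable F \<Gamma> (imp F \<phi> \<psi>)"
  from der_mp[OF der_hyp[of \<phi> "{\<phi>}"] this assms(3)] have "derivable F ({\<phi>} \<union> \<Gamma>) \<psi>"
    by simp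
  then show "derivable F (\<Gamma> \<union> {\<phi>}) \<psi>"
    by (simp add: Un_commute)
qed

end
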